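(* Consider the thresholding bandit setting and algorithm LSA with parameter $\alpha$ in the context, with $0<\alpha\le 8$ and $T\ge\max\{40/\alpha+1,40\}K$. Let $f(x)=\alpha x+\ln\alpha+0.5-\alpha$. For every arm $i\in B$ and every $\varkappa\ge\frac{\alpha-\ln\alpha-0.5}{\alpha}$, on the event $\mathcal{M}_{i,\varkappa}\cap\mathcal{F}_{\Lambda-f(\varkappa)}$ we have $T_i(T)\ge\lambda_i/20$.
   Context: $K\ge2$ arms; arm $i$ has reward distribution $\mathcal{D}_i$ on $[0,1]$ with mean $\theta_i$; $\theta\in(0,1)$; $\Delta_i=|\theta_i-\theta|$ (convention $\ln(1/0)=+\infty$). For each $i$, rewards $X_{i,1},X_{i,2},\dots$ from successive pulls of arm $i$ are i.i.d. from $\mathcal{D}_i$, independent across arms; $\hat\Delta_{i,t}=|\frac1t\sum_{s\le t}X_{i,s}-\theta|$. $T_i(t)$ = number of pulls of arm $i$ in the first $t$ rounds; $\hat\Delta_i(t)=\hat\Delta_{i,T_i(t)}$. LSA (parameter $\alpha>0$, budget $T$): pull each arm once in rounds $1..K$; in round $t=K+1,\dots,T$ pull an arm minimizing $\alpha T_i(t-1)(\hat\Delta_i(t-1))^2+0.5\ln T_i(t-1)$. $\xi_i(t)=\alpha T_i(t)(\hat\Delta_i(t))^2+0.5\ln T_i(t)$ for $t\ge K$; $\mathcal{F}_C=\{\exists T',K\le T'\le T:\xi_i(T')>C\ \forall i\}$. $M=\max\{40/\alpha+1,40\}$; $g_i(x)=e^{2x}$ if $x\le\ln\Delta_i^{-1}$,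 $g_i(x)=\frac{x-\ln\Delta_i^{-1}+\alpha}{\alpha\Delta_i^2}$ otherwise; $\Lambda$ is the unique $x\ge0$ with $\sum_ig_i(x)=T/M$; $\lambda_i=g_i(\Lambda)$; $B=\{i:\ln\Delta_i^{-1}<\Lambda\}$. $\mathcal{M}_{i,\varkappa}$ is the event that for all integers $1\le t\le\lambda_i$, $|\hat\Delta_{i,t}-\Delta_i|\le\sqrt{(\lambda_i\Delta_i^2/5-\varkappa/2+\frac1{4\alpha}\ln\frac{\lambda_i}{t})/t}$. *)

theory Defs
  imports Complex_Main
begin

(* Arms are 0..<K.  Rounds are 1..T.  I t is the arm pulled in round t.
   X i s is the reward of the s-th pull (s >= 1) of arm i. *)

definition pulls :: "(nat \<Rightarrow> nat) \<Rightarrow> nat \<Rightarrow> nat \<Rightarrow> nat" where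
  "pulls I i t = card {s \<in> {1..t}. I s = i}"

definition emp_gap :: "(nat \<Rightarrow> nat \<Rightarrow> real) \<Rightarrow> real \<Rightarrow> nat \<Rightarrow> nat \<Rightarrow> real" where
  "emp_gap X \<theta> i t = \<bar>(\<Sum>s=1..t. X i s) / real t - \<theta>\<bar>"

definition lsa_index :: "real \<Rightarrow> (nat \<Rightarrow> nat \<Rightarrow> real) \<Rightarrow> real \<Rightarrow> (nat \<Rightarrow> nat) \<Rightarrow> nat \<Rightarrow> nat \<Rightarrow> real" where
  "lsa_index \<alpha> X \<theta> I i t =
     \<alpha> * real (pulls I i t) * (emp_gap X \<theta> i (pulls I i t))\<^sup>2 + 0.5 * ln (real (pulls I i t))"

definition is_LSA_run :: "nat \<Rightarrow> real \<Rightarrow> nat \<Rightarrow> (nat \<Rightarrow> nat \<Rightarrow> real) \<Rightarrow> real \<Rightarrow> (nat \<Rightarrow> nat) \<Rightarrow> bool" where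
  "is_LSA_run K \<alpha> T X \<theta> I \<longleftrightarrow>
     bij_betw I {1..K} {..<K} \<and>
     (\<forall>t \<in> {K+1..T}. I t < K \<and>
        (\<forall>j<K. lsa_index \<alpha> X \<theta> I (I t) (t - 1) \<le> lsa_index \<alpha> X \<theta> I j (t - 1)))"

definition event_F :: "nat \<Rightarrow> real \<Rightarrow> nat \<Rightarrow> (nat \<Rightarrow> nat \<Rightarrow> real) \<Rightarrow> real \<Rightarrow> (nat \<Rightarrow> nat) \<Rightarrow> real \<Rightarrow> bool" where
  "event_F K \<alpha> T X \<theta> I C \<longleftrightarrow>
     (\<exists>T'. K \<le> T' \<and> T' \<le> T \<and> (\<forall>i<K. lsa_index \<alpha> X \<theta> I i T' > C))"

(* g_i, with the convention ln(1/0) = +infinity *)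
definition g_fun :: "real \<Rightarrow> real \<Rightarrow> real \<Rightarrow> real" where
  "g_fun \<alpha> \<Delta> x =
     (if \<Delta> = 0 \<or> x \<le> ln (1 / \<Delta>) then exp (2 * x)
      else (x - ln (1 / \<Delta>) + \<alpha>) / (\<alpha> * \<Delta>\<^sup>2))"

definition Mconst :: "real \<Rightarrow> real" where
  "Mconst \<alpha> = max (40 / \<alpha> + 1) 40"

definition Lambda :: "nat \<Rightarrow> real \<Rightarrow> nat \<Rightarrow> (nat \<Rightarrow> real) \<Rightarrow> real" where
  "Lambda K \<alpha> T \<Delta> = (THE x. x \<ge> 0 \<and> (\<Sum>i<K. g_fun \<alpha> (\<Delta> i) x) = real T / Mconst \<alpha>)"

definition lam :: "nat \<Rightarrow> real \<Rightarrow> nat \<Rightarrow> (nat \<Rightarrow> real) \<Rightarrow> nat \<Rightarrow> real" where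
  "lam K \<alpha> T \<Delta> i = g_fun \<alpha> (\<Delta> i) (Lambda K \<alpha> T \<Delta>)"

definition setB :: "nat \<Rightarrow> real \<Rightarrow> nat \<Rightarrow> (nat \<Rightarrow> real) \<Rightarrow> nat set" where
  "setB K \<alpha> T \<Delta> = {i. i < K \<and> \<Delta> i \<noteq> 0 \<and> ln (1 / \<Delta> i) < Lambda K \<alpha> T \<Delta>}"

(* event M_{i,kappa}; \<Delta>i = \<Delta>_i, li = \<lambda>_i *)
definition event_M :: "real \<Rightarrow> (nat \<Rightarrow> nat \<Rightarrow> real) \<Rightarrow> real \<Rightarrow> real \<Rightarrow> real \<Rightarrow> real \<Rightarrow> nat \<Rightarrow> bool" where
  "event_M \<alpha> X \<theta> \<Delta>i li \<kappa> i \<longleftrightarrow>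
     (\<forall>t::nat. 1 \<le> t \<and> real t \<le> li \<longrightarrow>
        \<bar>emp_gap X \<theta> i t - \<Delta>i\<bar>
          \<le> sqrt ((li * \<Delta>i\<^sup>2 / 5 - \<kappa> / 2 + 1 / (4 * \<alpha>) * ln (li / real t)) / real t))"

end

theory Submission
  imports Defs
begin

(* Suppose arm i has fewer than lambda_i/20 pulls at time T, and let T' be the time given by F.
   Then its pull count n = T_i(T') satisfies 1 <= n < lambda_i/20.  On M the empirical gap after
   n pulls deviates from Delta_i by at most the square root in M at t = n, and evaluating M at
   t = floor lambda_i also bounds kappa from above.  With u = alpha lambda_i Delta_i^2
   = Lambda - ln (1/Delta_i) + alpha and ln (lambda_i/n) > ln 20, elementary estimates for
   the logarithm then give xi_i(T') <= Lambda - f(kappa), contradicting F. *)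

lemma ln_20_ge: "29/10 \<le> ln (20::real)"
proof -
  have "1/21 \<le> ln (21/20::real)"
    using ln_add1_ge[of "1/20"] by simp
  hence "61/21 \<le> ln ((21/20::real) ^ 61)"
    by (simp add: ln_realpow)
  also have "\<dots> \<le> ln 20"
    by (simp add: power_divide)
  finally show ?thesis by simp
qed

lemma ln_20_div_9_le: "ln (20/9::real) \<le> 41/50"
proof -
  have "ln (20/9 / (21/20)^16 :: real) \<le> 20/9 / (21/20)^16 - 1"
    by (rule ln_le_minus_one) simp
  also have "\<dots> \<le> 181/10000"
    by (simp add: power_divide)
  moreover have "ln (20/9 / (21/20)^16 :: real) = ln (20/9) - 16 * ln (21/20)"
    by (subst ln_divide_pos) (simp_all add: ln_realpow)
  ultimately have "ln (20/9::real) - 16 * ln (21/20) \<le> 181/10000"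
    by linarith
  moreover have "ln (21/20::real) \<le> 1/20"
    using ln_le_minus_one[of "21/20::real"] by simp
  ultimately show ?thesis by linarith
qed

(* tangent line of ln at 20/9 *)
lemma ln_le_affine: "0 < (u::real) \<Longrightarrow> ln u \<le> 9/20 * u - 9/50"
  using ln_le_minus_one[of "9/20 * u"] ln_20_div_9_le
  by (simp add: ln_mult_pos ln_div)

lemma power2_le_of_abs_diff_le:
  fixes a b s :: real
  assumes "\<bar>a - b\<bar> \<le> s"
  shows "a\<^sup>2 \<le> 3 * b\<^sup>2 + 3/2 * s\<^sup>2"
proof -
  have "\<bar>a\<bar> \<le> \<bar>b\<bar> + s" using assms by linarith
  hence "a\<^sup>2 \<le> (\<bar>b\<bar> + s)\<^sup>2"
    by (metis abs_ge_zero abs_le_square_iff abs_of_nonneg order.trans)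
  also have "\<dots> \<le> 3 * b\<^sup>2 + 3/2 * s\<^sup>2"
    using zero_le_power2[of "2 * \<bar>b\<bar> - s"] by (simp add: power2_eq_square algebra_simps)
  finally show ?thesis .
qed

lemma lsa_index_le_of_deviation_bound:
  fixes \<alpha> \<Delta> \<Lambda> \<kappa> lm D n :: real
  assumes \<alpha>: "0 < \<alpha>" and \<Delta>: "0 < \<Delta>" and \<Lambda>: "ln (1/\<Delta>) < \<Lambda>"
    and lm: "lm = (\<Lambda> - ln (1/\<Delta>) + \<alpha>) / (\<alpha> * \<Delta>\<^sup>2)"
    and n: "1 \<le> n" "n < lm / 20"
    and \<kappa>: "\<kappa> / 2 \<le> lm * \<Delta>\<^sup>2 / 5 + 1 / (80 * \<alpha>)"
    and dev: "\<bar>D - \<Delta>\<bar> \<le> sqrt ((lm * \<Delta>\<^sup>2 / 5 - \<kappa> / 2 + 1 / (4 * \<alpha>) * ln (lm / n)) / n)"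
  shows "\<alpha> * n * D\<^sup>2 + 0.5 * ln n \<le> \<Lambda> - (\<alpha> * \<kappa> + ln \<alpha> + 0.5 - \<alpha>)"
proof -
  define L where "L = ln (1/\<Delta>)"
  define u where "u = \<alpha> * lm * \<Delta>\<^sup>2"
  define r where "r = ln (lm / n)"
  define E where "E = lm * \<Delta>\<^sup>2 / 5 - \<kappa> / 2 + 1 / (4 * \<alpha>) * r"
  have u_eq: "u = \<Lambda> - L + \<alpha>"
    using lm \<alpha> \<Delta> by (simp add: u_def L_def field_simps)
  with \<Lambda> have "\<alpha> < u" by (simp add: L_def)
  have lm_pos: "0 < lm" using n by simp
  have dev_E: "\<bar>D - \<Delta>\<bar> \<le> sqrt (E / n)"
    using dev by (simp only: E_def r_def)
  hence "0 \<le> sqrt (E / n)"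
    by (meson abs_ge_zero order_trans)
  hence sqrt_sq: "(sqrt (E / n))\<^sup>2 = E / n" by simp
  have "D\<^sup>2 \<le> 3 * \<Delta>\<^sup>2 + 3/2 * (E / n)"
    using power2_le_of_abs_diff_le[OF dev_E] by (simp only: sqrt_sq)
  hence "\<alpha> * n * D\<^sup>2 \<le> \<alpha> * n * (3 * \<Delta>\<^sup>2 + 3/2 * (E / n))"
    using \<alpha> n by (intro mult_left_mono) auto
  also have "\<dots> = 3 * (\<alpha> * n * \<Delta>\<^sup>2) + 3/2 * (\<alpha> * E)"
    using n by (simp add: field_simps)
  finally have quad: "\<alpha> * n * D\<^sup>2 \<le> 3 * (\<alpha> * n * \<Delta>\<^sup>2) + 3/2 * (\<alpha> * E)" .
  have "\<alpha> * n * \<Delta>\<^sup>2 < \<alpha> * (lm / 20) * \<Delta>\<^sup>2"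
    using n \<alpha> \<Delta> by simp
  hence "\<alpha> * n * \<Delta>\<^sup>2 < u / 20" by (simp add: u_def)
  moreover have "\<alpha> * E = u / 5 - \<alpha> * \<kappa> / 2 + r / 4"
    using \<alpha> by (simp add: E_def u_def field_simps)
  moreover have "\<alpha> * \<kappa> \<le> 2 * u / 5 + 1/40"
  proof -
    have "\<alpha> * (\<kappa> / 2) \<le> \<alpha> * (lm * \<Delta>\<^sup>2 / 5 + 1 / (80 * \<alpha>))"
      using \<kappa> \<alpha> by (intro mult_left_mono) auto
    also have "\<dots> = u / 5 + 1/80"
      using \<alpha> by (simp add: u_def field_simps)
    finally show ?thesis by simp
  qed
  moreover have "29/10 < r"
  proof -
    have "20 < lm / n" using n by (simp add: field_simps)
    hence "ln 20 < r" unfolding r_def using n by (subst ln_less_cancel_iff) auto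
    with ln_20_ge show ?thesis by linarith
  qed
  moreover have "ln n = ln u - ln \<alpha> + 2 * L - r"
  proof -
    have "ln n = ln lm - r" using lm_pos n by (simp add: r_def ln_divide_pos)
    moreover have "lm = u / \<alpha> * (1/\<Delta>)\<^sup>2" using \<alpha> \<Delta> by (simp add: u_def field_simps)
    ultimately show ?thesis using \<open>\<alpha> < u\<close> \<alpha> \<Delta>
      by (simp add: L_def ln_mult_pos ln_divide_pos ln_realpow)
  qed
  moreover have "ln \<alpha> \<le> ln u" using \<alpha> \<open>\<alpha> < u\<close> by simp
  moreover have "ln u \<le> 9/20 * u - 9/50" using \<alpha> \<open>\<alpha> < u\<close> by (intro ln_le_affine) simp
  ultimately show ?thesis using quad u_eq by linarith
qed

lemma pulls_mono: "t \<le> t' \<Longrightarrow> pulls I i t \<le> pulls I i t'"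
  unfolding pulls_def by (intro card_mono) auto

lemma pulls_pos_of_LSA_run:
  assumes "is_LSA_run K \<alpha> T X \<theta> I" "i < K" "K \<le> t"
  shows "1 \<le> pulls I i t"
proof -
  have "i \<in> I ` {1..K}"
    using assms(1,2) by (auto simp: is_LSA_run_def bij_betw_def)
  then obtain s where "s \<in> {1..K}" "I s = i" by blast
  with assms(3) have "{s \<in> {1..t}. I s = i} \<noteq> {}" by (auto intro!: exI[of _ s])
  thus ?thesis unfolding pulls_def
    by (simp add: Suc_le_eq card_gt_0_iff)
qed

lemma lam_of_setB:
  assumes "i \<in> setB K \<alpha> T \<Delta>"
  shows "lam K \<alpha> T \<Delta> i = (Lambda K \<alpha> T \<Delta> - ln (1 / \<Delta> i) + \<alpha>) / (\<alpha> * (\<Delta> i)\<^sup>2)"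
  using assms by (simp add: setB_def lam_def g_fun_def)

text \<open>At \<open>t = \<lfloor>\<lambda>\<^sub>i\<rfloor>\<close> the term \<open>ln (\<lambda>\<^sub>i / t)\<close> is at most \<open>1/20\<close>, and the radicand
  of the event must be nonnegative there.\<close>
lemma event_M_half_kappa_le:
  assumes M: "event_M \<alpha> X \<theta> \<Delta>i lm \<kappa> i" and \<alpha>: "0 < \<alpha>" and lm: "20 \<le> lm"
  shows "\<kappa> / 2 \<le> lm * \<Delta>i\<^sup>2 / 5 + 1 / (80 * \<alpha>)"
proof -
  define m where "m = nat \<lfloor>lm\<rfloor>"
  have m: "real m \<le> lm" "lm < real m + 1" "20 \<le> real m"
    using lm by (simp_all add: m_def le_nat_floor)
  have "\<bar>emp_gap X \<theta> i m - \<Delta>i\<bar>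
      \<le> sqrt ((lm * \<Delta>i\<^sup>2 / 5 - \<kappa> / 2 + 1 / (4 * \<alpha>) * ln (lm / m)) / m)"
    using M m by (simp add: event_M_def)
  hence "0 \<le> (lm * \<Delta>i\<^sup>2 / 5 - \<kappa> / 2 + 1 / (4 * \<alpha>) * ln (lm / m)) / m"
    by (metis abs_ge_zero order_trans real_sqrt_ge_0_iff)
  hence radicand: "0 \<le> lm * \<Delta>i\<^sup>2 / 5 - \<kappa> / 2 + 1 / (4 * \<alpha>) * ln (lm / m)"
    using m by (simp add: zero_le_divide_iff)
  have "ln (lm / m) \<le> lm / m - 1"
    using m by (intro ln_le_minus_one) simp
  also have "\<dots> \<le> 1/20"
    using m by (simp add: field_simps)
  finally have "1 / (4 * \<alpha>) * ln (lm / m) \<le> 1 / (4 * \<alpha>) * (1/20)"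
    using \<alpha> by (intro mult_left_mono) auto
  with radicand show ?thesis by simp
qed

theorem lemma10:
  fixes K T :: nat and \<alpha> \<theta> \<kappa> :: real
    and \<theta>s :: "nat \<Rightarrow> real" and X :: "nat \<Rightarrow> nat \<Rightarrow> real" and I :: "nat \<Rightarrow> nat" and i :: nat
  defines "\<Delta> \<equiv> (\<lambda>j. \<bar>\<theta>s j - \<theta>\<bar>)"
  defines "f \<equiv> (\<lambda>x::real. \<alpha> * x + ln \<alpha> + 0.5 - \<alpha>)"
  assumes K: "K \<ge> 2"
    and alpha: "0 < \<alpha>" "\<alpha> \<le> 8"
    and T: "real T \<ge> Mconst \<alpha> * real K"
    and theta: "0 < \<theta>" "\<theta> < 1"
    and means: "\<forall>j<K. 0 \<le> \<theta>s j \<and> \<theta>s j \<le> 1"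
    and rewards: "\<forall>j<K. \<forall>s\<ge>1. 0 \<le> X j s \<and> X j s \<le> 1"
    and run: "is_LSA_run K \<alpha> T X \<theta> I"
    and iB: "i \<in> setB K \<alpha> T \<Delta>"
    and kappa: "\<kappa> \<ge> (\<alpha> - ln \<alpha> - 0.5) / \<alpha>"
    and evM: "event_M \<alpha> X \<theta> (\<Delta> i) (lam K \<alpha> T \<Delta> i) \<kappa> i"
    and evF: "event_F K \<alpha> T X \<theta> I (Lambda K \<alpha> T \<Delta> - f \<kappa>)"
  shows "real (pulls I i T) \<ge> lam K \<alpha> T \<Delta> i / 20"
proof (rule ccontr)
  assume few_pulls: "\<not> lam K \<alpha> T \<Delta> i / 20 \<le> real (pulls I i T)"
  have iK: "i < K" and \<Delta>i: "0 < \<Delta> i" and \<Lambda>: "ln (1 / \<Delta> i) < Lambda K \<alpha> T \<Delta>"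
    using iB by (auto simp: setB_def \<Delta>_def)
  obtain T' where T': "K \<le> T'" "T' \<le> T"
    and index_large: "lsa_index \<alpha> X \<theta> I i T' > Lambda K \<alpha> T \<Delta> - f \<kappa>"
    using evF iK by (auto simp: event_F_def)
  define n where "n = pulls I i T'"
  have n: "1 \<le> real n" "real n < lam K \<alpha> T \<Delta> i / 20"
    using pulls_pos_of_LSA_run[OF run iK T'(1)] pulls_mono[OF T'(2), of I i] few_pulls
    by (simp_all add: n_def)
  have "\<kappa> / 2 \<le> lam K \<alpha> T \<Delta> i * (\<Delta> i)\<^sup>2 / 5 + 1 / (80 * \<alpha>)"
    using evM alpha(1) n by (intro event_M_half_kappa_le) auto
  moreover have "\<bar>emp_gap X \<theta> i n - \<Delta> i\<bar> \<le> sqrt ((lam K \<alpha> T \<Delta> i * (\<Delta> i)\<^sup>2 / 5 - \<kappa> / 2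
      + 1 / (4 * \<alpha>) * ln (lam K \<alpha> T \<Delta> i / n)) / n)"
    using evM n by (simp add: event_M_def)
  ultimately have "lsa_index \<alpha> X \<theta> I i T' \<le> Lambda K \<alpha> T \<Delta> - f \<kappa>"
    using lsa_index_le_of_deviation_bound[OF alpha(1) \<Delta>i \<Lambda> lam_of_setB[OF iB] n]
    by (simp add: lsa_index_def f_def n_def)
  with index_large show False by simp
qed

end
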